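(* Let $T$ be a type and $S$ a session type (for which the expressions below are well formed). Then: (1) $\mathsf{Dual}\,(T\,\S\,S) \equiv (\langle - \rangle T)\,\S\,(\mathsf{Dual}\,S)$ (type conversion at the kind of session types); (2) $\langle - \rangle(\langle + \rangle T) = \langle - \rangle T$ (syntactic equality); (3) $\langle - \rangle(\langle - \rangle T) = \langle + \rangle T$ (syntactic equality).
   Context: Types include a negation (direction-reversal) form $-U$ for protocol types, session types $?U.S$ (receive $U$, continue as $S$) and $!U.S$ (send $U$, continue as $S$), and the duality operator $\mathsf{Dual}\,S$ on session types. The directional operators $\langle + \rangle$ and $\langle - \rangle$ on types are defined by: $\langle + \rangle(-U) = \langle - \rangle U$ and $\langle + \rangle T = T$ if $T$ is not of the form $-U$; $\langle - \rangle(-U) = \langle + \rangle U$ and $\langle - \rangle T = -T$ if $T$ is not of the form $-U$. The materialization operator is defined by $(-U)\,\S\,S = {?U}.S$, and $T\,\S\,S = {!T}.S$ if $T$ is not of the form $-U$. Type conversion $\equiv$ on session types is a congruence (reflexive, symmetric, transitive, closed under type constructors) that contains in particular the rules $\mathsf{Dual}\,(?U.S) \equiv {!U}.\mathsf{Dual}\,S$, $\mathsf{Dual}\,(!U.S) \equiv {?U}.\mathsf{Dual}\,S$, ${?(-U)}.S \equiv {!U}.S$ and ${!(-U)}.S \equiv {?U}.S$. *)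

theory Defs
  imports Main
begin

text \<open>Syntax of types (a representative fragment): base types, functional types,
  the negation (direction reversal) -U, session types ?U.S, !U.S, end, and Dual S.\<close>
datatype ty =
    TVar nat
  | TUnit
  | TFun ty ty
  | TEnd
  | TNeg ty
  | TIn ty ty
  | TOut ty ty
  | TDual ty

fun dplus :: "ty \<Rightarrow> ty" and dminus :: "ty \<Rightarrow> ty" where
  "dplus (TNeg U) = dminus U"
| "dplus T = T"
| "dminus (TNeg U) = dplus U"
| "dminus T = TNeg T"

fun mat :: "ty \<Rightarrow> ty \<Rightarrow> ty" where
  "mat (TNeg U) S = TIn U S"
| "mat T S = TOut T S"

inductive conv :: "ty \<Rightarrow> ty \<Rightarrow> bool" (infix "\<equiv>\<^sub>t" 50) where
  c_refl: "T \<equiv>\<^sub>t T"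
| c_sym: "T \<equiv>\<^sub>t U \<Longrightarrow> U \<equiv>\<^sub>t T"
| c_trans: "T \<equiv>\<^sub>t U \<Longrightarrow> U \<equiv>\<^sub>t V \<Longrightarrow> T \<equiv>\<^sub>t V"
| c_fun: "T \<equiv>\<^sub>t T' \<Longrightarrow> U \<equiv>\<^sub>t U' \<Longrightarrow> TFun T U \<equiv>\<^sub>t TFun T' U'"
| c_neg: "T \<equiv>\<^sub>t T' \<Longrightarrow> TNeg T \<equiv>\<^sub>t TNeg T'"
| c_in: "T \<equiv>\<^sub>t T' \<Longrightarrow> U \<equiv>\<^sub>t U' \<Longrightarrow> TIn T U \<equiv>\<^sub>t TIn T' U'"
| c_out: "T \<equiv>\<^sub>t T' \<Longrightarrow> U \<equiv>\<^sub>t U' \<Longrightarrow> TOut T U \<equiv>\<^sub>t TOut T' U'"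
| c_dual: "T \<equiv>\<^sub>t T' \<Longrightarrow> TDual T \<equiv>\<^sub>t TDual T'"
| c_dual_in: "TDual (TIn U S) \<equiv>\<^sub>t TOut U (TDual S)"
| c_dual_out: "TDual (TOut U S) \<equiv>\<^sub>t TIn U (TDual S)"
| c_in_neg: "TIn (TNeg U) S \<equiv>\<^sub>t TOut U S"
| c_out_neg: "TOut (TNeg U) S \<equiv>\<^sub>t TIn U S"

end

theory Submission
  imports Defs
begin

text \<open>Materialization commutes with duality because duality flips the direction of the head
  message, which is exactly what \<open>\<langle>-\<rangle>\<close> does to the payload. The payload produced by
  \<open>\<langle>\<plusminus>\<rangle>\<close> may itself be a stack of negations, so the materializations of \<open>\<langle>+\<rangle> U\<close> and
  \<open>\<langle>-\<rangle> U\<close> are only convertible (not equal) to \<open>!U.S\<close> and \<open>?U.S\<close>, by a joint induction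
  on the number of negations.\<close>

lemma dminus_dplus_dminus_dminus:
  shows dminus_dplus: "dminus (dplus T) = dminus T"
    and dminus_dminus: "dminus (dminus T) = dplus T"
  by (induction T) auto

lemma mat_dplus_dminus_conv:
  shows mat_dplus_conv: "mat (dplus U) S \<equiv>\<^sub>t TOut U S"
    and mat_dminus_conv: "mat (dminus U) S \<equiv>\<^sub>t TIn U S"
proof (induction U)
  case (TNeg V)
  have "mat (dplus (TNeg V)) S \<equiv>\<^sub>t TIn V S"
    using TNeg.IH(2) by simp
  then show "mat (dplus (TNeg V)) S \<equiv>\<^sub>t TOut (TNeg V) S"
    using c_out_neg by (blast intro: c_trans c_sym)
  have "mat (dminus (TNeg V)) S \<equiv>\<^sub>t TOut V S"
    using TNeg.IH(1) by simp
  then show "mat (dminus (TNeg V)) S \<equiv>\<^sub>t TIn (TNeg V) S"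
    using c_in_neg by (blast intro: c_trans c_sym)
qed (auto intro: c_refl)

lemma dual_mat_conv: "TDual (mat T S) \<equiv>\<^sub>t mat (dminus T) (TDual S)"
proof (cases T)
  case (TNeg U)
  have "TDual (TIn U S) \<equiv>\<^sub>t TOut U (TDual S)"
    by (rule c_dual_in)
  moreover have "mat (dplus U) (TDual S) \<equiv>\<^sub>t TOut U (TDual S)"
    by (rule mat_dplus_conv)
  ultimately show ?thesis
    using TNeg by (auto intro: c_trans c_sym)
qed (auto intro: c_dual_out)

theorem mainTheorem1:
  fixes T S :: ty
  shows "TDual (mat T S) \<equiv>\<^sub>t mat (dminus T) (TDual S)
         \<and> dminus (dplus T) = dminus T
         \<and> dminus (dminus T) = dplus T"
  using dual_mat_conv dminus_dplus dminus_dminus by blast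

end
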